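(* Let $G=(V,E)$ be a connected, $d$-regular graph on $n$ vertices, let $A$ be its adjacency matrix and $D = d\cdot I_n$ the diagonal matrix of vertex degrees, and let $1 = \lambda_1 \geq |\lambda_2| \geq \dots \geq |\lambda_n| \geq 0$ be the eigenvalues of the symmetric matrix $AD^{-1}$, ordered by absolute value. Let $1 \leq \ell \leq n-1$. Then there exists a probability measure $\mu_0$ on $V$ supported on at most $\ell$ vertices such that the sequence of measures defined by $\mu_{k+1} = AD^{-1}\mu_k$ satisfies, for all integers $k \geq 0$, $$\sum_{v\in V}\left|\mu_k(v) - \frac{1}{n}\right|^2 \leq \lambda_{\ell+1}^{2k}.$$
   Context: Probability measures on $V=\{v_1,\dots,v_n\}$ are identified with vectors in $\mathbb{R}^n_{\geq 0}$ whose entries sum to $1$; the support of a measure is the set of vertices with nonzero mass. $AD^{-1}=\frac1d A$ acts on such vectors by matrix multiplication (this is one step of the simple random walk). *)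

theory Defs
  imports "Jordan_Normal_Form.Char_Poly"
begin

definition adjacency_matrix :: "nat \<Rightarrow> real mat \<Rightarrow> bool" where
  "adjacency_matrix n A \<longleftrightarrow> A \<in> carrier_mat n n \<and>
     (\<forall>i<n. \<forall>j<n. A $$ (i,j) = 0 \<or> A $$ (i,j) = 1) \<and>
     (\<forall>i<n. \<forall>j<n. A $$ (i,j) = A $$ (j,i)) \<and>
     (\<forall>i<n. A $$ (i,i) = 0)"

definition regular_graph :: "nat \<Rightarrow> real mat \<Rightarrow> nat \<Rightarrow> bool" where
  "regular_graph n A d \<longleftrightarrow> (\<forall>i<n. (\<Sum>j<n. A $$ (i,j)) = real d)"

definition graph_edges :: "nat \<Rightarrow> real mat \<Rightarrow> (nat \<times> nat) set" where
  "graph_edges n A = {(i,j). i < n \<and> j < n \<and> A $$ (i,j) = 1}"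

definition connected_graph :: "nat \<Rightarrow> real mat \<Rightarrow> bool" where
  "connected_graph n A \<longleftrightarrow> (\<forall>i<n. \<forall>j<n. (i,j) \<in> (graph_edges n A)\<^sup>*)"

text \<open>The list ls enumerates the eigenvalues of M with algebraic multiplicity
  (the characteristic polynomial splits with exactly these roots), ordered by
  non-increasing absolute value.\<close>

definition eigenvalues_by_abs :: "real mat \<Rightarrow> real list \<Rightarrow> bool" where
  "eigenvalues_by_abs M ls \<longleftrightarrow>
     char_poly M = (\<Prod>a\<leftarrow>ls. [:- a, 1:]) \<and>
     sorted_wrt (\<lambda>x y. \<bar>x\<bar> \<ge> \<bar>y\<bar>) ls"

end

(*
  Let P = A D^-1, a symmetric stochastic matrix, u the uniform vector, and
  G = (P - lambda_(l+1) I) ... (P - lambda_n I), where lambda_(l+1) is ls ! l since the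
  list is 0-indexed.  Triangularising P (Schur) with the eigenvalues lambda_(l+1), ...,
  lambda_n first shows that G kills an (n - l)-dimensional space, so for every set C of
  fewer than n - l coordinates some nonzero kernel vector of G vanishes on C.  If
  |lambda_(l+1)| < 1 then 1 is not a root of G, and since P preserves coordinate sums,
  kernel vectors of G sum to zero.  Starting from u and moving inside the simplex along
  such kernel vectors (a Caratheodory-type argument) yields a probability vector mu_0
  with at most l atoms and x = mu_0 - u in the kernel of G.

  For symmetric P the sequence |P^k x|^2 is log-convex, and on the kernel of G it grows
  more slowly than s^k for every s > lambda_(l+1)^2; together these force
  |P^k x|^2 <= lambda_(l+1)^(2k) |x|^2, and |x|^2 <= 1.  If |lambda_(l+1)| >= 1 any point
  mass works, since every probability vector lies within distance 1 of u.
*)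

theory Submission
  imports
    Defs
    "Jordan_Normal_Form.Schur_Decomposition"
    "Jordan_Normal_Form.Jordan_Normal_Form_Uniqueness"
    "HOL-Analysis.L2_Norm"
begin

fun char_matrix_prod :: "'a :: field mat \<Rightarrow> 'a list \<Rightarrow> 'a mat" where
  "char_matrix_prod A [] = 1\<^sub>m (dim_row A)"
| "char_matrix_prod A (a # as) = char_matrix A a * char_matrix_prod A as"

lemma char_matrix_prod_carrier [simp]:
  "A \<in> carrier_mat n n \<Longrightarrow> char_matrix_prod A as \<in> carrier_mat n n"
  by (induction as) (auto intro!: mult_carrier_mat)

lemma char_matrix_prod_append:
  assumes "A \<in> carrier_mat n n"
  shows "char_matrix_prod A (as @ bs) = char_matrix_prod A as * char_matrix_prod A bs"
  using assms left_mult_one_mat[OF char_matrix_prod_carrier[OF assms, of bs]]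
  by (induction as) (auto simp: assoc_mult_mat[of _ n n _ n _ n] carrier_matD(1))

lemma char_matrix_prod_snoc_mult_vec:
  assumes "A \<in> carrier_mat n n" and "v \<in> carrier_vec n"
  shows "char_matrix_prod A (as @ [a]) *\<^sub>v v = char_matrix_prod A as *\<^sub>v (char_matrix A a *\<^sub>v v)"
proof -
  have "char_matrix A a * 1\<^sub>m n = char_matrix A a"
    using assms(1) by (intro right_mult_one_mat[of _ n]) auto
  then show ?thesis
    using assms by (simp add: char_matrix_prod_append assoc_mult_mat_vec[of _ n n _ n] carrier_matD(1))
qed

lemma char_matrix_mult_vec:
  assumes "A \<in> carrier_mat n n" and "v \<in> carrier_vec n"
  shows "char_matrix A e *\<^sub>v v = A *\<^sub>v v - e \<cdot>\<^sub>v v"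
  unfolding char_matrix_def
  by (rule eq_vecI, insert assms, auto simp: add_scalar_prod_distrib[of _ n])

lemma similar_mat_wit_mult:
  assumes "similar_mat_wit A B P Q" and "similar_mat_wit A' B' P Q"
  shows "similar_mat_wit (A * A') (B * B') P Q"
proof -
  define n where "n = dim_row A"
  note AB = similar_mat_witD[OF n_def assms(1)]
  have "dim_row A' = n"
    using assms(2) AB(6) unfolding similar_mat_wit_def Let_def by auto
  note AB' = similar_mat_witD[OF this[symmetric] assms(2)]
  have QP: "Q * (P * Z) = Z" if "Z \<in> carrier_mat n n" for Z
    using AB that by (simp add: assoc_mult_mat[symmetric, of Q n n P n Z n])
  have "A * A' = P * (B * B') * Q"
    using AB AB' by (simp add: assoc_mult_mat[of _ n n _ n _ n] QP)
  then show ?thesis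
    using AB AB' by (intro similar_mat_witI[of P Q n]) auto
qed

lemma similar_mat_wit_char_matrix_prod:
  assumes "similar_mat_wit A B P Q"
  shows "similar_mat_wit (char_matrix_prod A as) (char_matrix_prod B as) P Q"
proof (induction as)
  case Nil
  show ?case using similar_mat_wit_pow[OF assms, of 0] by simp
next
  case (Cons a as)
  then show ?case
    using similar_mat_wit_mult[OF similar_mat_wit_char_matrix[OF assms]] by simp
qed

lemma upper_triangular_mult_vec_index:
  assumes B: "B \<in> carrier_mat n n" and ut: "upper_triangular B"
    and v: "v \<in> carrier_vec n" and i: "k \<le> i" "i < n"
    and high: "\<And>j. k < j \<Longrightarrow> j < n \<Longrightarrow> v $ j = 0"
  shows "(B *\<^sub>v v) $ i = B $$ (i,i) * v $ i"
proof -
  have "(B *\<^sub>v v) $ i = (\<Sum>j = 0..<n. B $$ (i,j) * v $ j)"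
    using B v i by (simp add: scalar_prod_def)
  also have "\<dots> = (\<Sum>j = 0..<n. if j = i then B $$ (i,i) * v $ i else 0)"
  proof (rule sum.cong[OF refl])
    fix j assume "j \<in> {0..<n}"
    then show "B $$ (i,j) * v $ j = (if j = i then B $$ (i,i) * v $ i else 0)"
      using ut B i high unfolding upper_triangular_def by (cases "j < i") auto
  qed
  finally show ?thesis using i by simp
qed

lemma upper_triangular_char_matrix_prod_kernel:
  assumes B: "B \<in> carrier_mat n n" and ut: "upper_triangular B" and "k \<le> n"
    and "v \<in> carrier_vec n" and "\<And>i. k \<le> i \<Longrightarrow> i < n \<Longrightarrow> v $ i = 0"
  shows "char_matrix_prod B (take k (diag_mat B)) *\<^sub>v v = 0\<^sub>v n"
  using assms(3-)
proof (induction k arbitrary: v)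
  case 0
  then have "v = 0\<^sub>v n" by (intro eq_vecI) auto
  then show ?case using B by (simp add: carrier_matD)
next
  case (Suc k)
  define w where "w = char_matrix B (B $$ (k,k)) *\<^sub>v v"
  have w: "w \<in> carrier_vec n" unfolding w_def using B Suc.prems(2) by (simp add: char_matrix_mult_vec)
  have "w $ i = 0" if "k \<le> i" "i < n" for i
    using that Suc.prems B upper_triangular_mult_vec_index[OF B ut Suc.prems(2) that]
    by (cases "i = k") (auto simp: w_def char_matrix_mult_vec)
  then have "char_matrix_prod B (take k (diag_mat B)) *\<^sub>v w = 0\<^sub>v n"
    using Suc by (intro Suc.IH w) auto
  moreover have "take (Suc k) (diag_mat B) = take k (diag_mat B) @ [B $$ (k,k)]"
    using Suc.prems(1) B by (simp add: take_Suc_conv_app_nth diag_mat_def)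
  ultimately show ?case
    unfolding w_def using char_matrix_prod_snoc_mult_vec[OF B Suc.prems(2)] by simp
qed

lemma wide_mat_nontrivial_kernel:
  fixes N :: "'a :: idom mat"
  assumes N: "N \<in> carrier_mat r c" and "r < c"
  obtains v where "v \<in> carrier_vec c" "v \<noteq> 0\<^sub>v c" "N *\<^sub>v v = 0\<^sub>v r"
proof -
  \<comment> \<open>pad N with zero rows to a square matrix; as r < c its last row is zero\<close>
  define N' where "N' = mat\<^sub>r c c (\<lambda>i. if i = c - 1 then 0\<^sub>v c else if i < r then row N i else 0\<^sub>v c)"
  have N': "N' \<in> carrier_mat c c" unfolding N'_def by simp
  have "det N' = 0" unfolding N'_def
    by (rule det_row_0) (use assms in auto)
  then obtain v where v: "v \<in> carrier_vec c" "v \<noteq> 0\<^sub>v c" "N' *\<^sub>v v = 0\<^sub>v c"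
    using det_0_iff_vec_prod_zero[OF N'] by auto
  have "N *\<^sub>v v = 0\<^sub>v r"
  proof (rule eq_vecI)
    fix i assume "i < dim_vec (0\<^sub>v r :: 'a vec)"
    then have i: "i < r" by simp
    have "(N' *\<^sub>v v) $ i = row N i \<bullet> v" using i assms unfolding N'_def by simp
    then show "(N *\<^sub>v v) $ i = 0\<^sub>v r $ i" using v(3) i assms by (simp add: vec_eq_iff)
  qed (use N in simp)
  with v that show ?thesis by blast
qed

lemma nonzero_low_vec_mult_vanishing_on:
  fixes P :: "'a :: idom mat"
  assumes P: "P \<in> carrier_mat n n" and "m \<le> n" and C: "C \<subseteq> {..<n}" "card C < m"
  obtains w where "w \<in> carrier_vec n" "w \<noteq> 0\<^sub>v n" "\<And>i. m \<le> i \<Longrightarrow> i < n \<Longrightarrow> w $ i = 0"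
    "\<And>i. i \<in> C \<Longrightarrow> (P *\<^sub>v w) $ i = 0"
proof -
  define idx where "idx = sorted_list_of_set C"
  have idx: "length idx = card C" "set idx = C"
    unfolding idx_def using finite_subset[OF C(1)] by auto
  define N where "N = mat (card C) m (\<lambda>(r, j). P $$ (idx ! r, j))"
  obtain w' where w': "w' \<in> carrier_vec m" "w' \<noteq> 0\<^sub>v m" "N *\<^sub>v w' = 0\<^sub>v (card C)"
    using wide_mat_nontrivial_kernel[of N "card C" m] C unfolding N_def by auto
  define w where "w = vec n (\<lambda>i. if i < m then w' $ i else 0)"
  have "w \<in> carrier_vec n" "\<And>i. m \<le> i \<Longrightarrow> i < n \<Longrightarrow> w $ i = 0" unfolding w_def by auto
  moreover have "w \<noteq> 0\<^sub>v n"
  proof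
    assume "w = 0\<^sub>v n"
    have "w' = 0\<^sub>v m"
    proof (rule eq_vecI)
      fix i assume "i < dim_vec (0\<^sub>v m :: 'a vec)"
      then have "i < m" "i < n" using \<open>m \<le> n\<close> by auto
      then have "w' $ i = w $ i" unfolding w_def by simp
      then show "w' $ i = 0\<^sub>v m $ i" using \<open>w = 0\<^sub>v n\<close> \<open>i < m\<close> \<open>i < n\<close> by simp
    qed (use w'(1) in simp)
    with w'(2) show False ..
  qed
  moreover have "(P *\<^sub>v w) $ i = 0" if i: "i \<in> C" for i
  proof -
    obtain r where r: "r < card C" "idx ! r = i"
      using i in_set_conv_nth[of i idx] idx by auto
    have "(P *\<^sub>v w) $ i = (\<Sum>j = 0..<n. P $$ (i, j) * w $ j)"
      using i C P unfolding w_def by (auto simp: scalar_prod_def)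
    also have "\<dots> = (\<Sum>j = 0..<m. P $$ (i, j) * w' $ j)"
      using \<open>m \<le> n\<close> unfolding w_def by (intro sum.mono_neutral_cong_right) auto
    also have "\<dots> = (N *\<^sub>v w') $ r"
      unfolding N_def using r w'(1) by (simp add: scalar_prod_def)
    finally show ?thesis using w'(3) r by simp
  qed
  ultimately show ?thesis using that by blast
qed

lemma similar_mat_wit_mult_vec:
  assumes sim: "similar_mat_wit A B P Q" and A: "A \<in> carrier_mat n n" and w: "w \<in> carrier_vec n"
  shows "A *\<^sub>v (P *\<^sub>v w) = P *\<^sub>v (B *\<^sub>v w)" and "Q *\<^sub>v (P *\<^sub>v w) = w"
proof -
  note AB = similar_mat_witD2[OF A sim]
  show QP: "Q *\<^sub>v (P *\<^sub>v w) = w"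
    using AB w by (simp add: assoc_mult_mat_vec[symmetric, of Q n n P n])
  then show "A *\<^sub>v (P *\<^sub>v w) = P *\<^sub>v (B *\<^sub>v w)"
    unfolding AB(3) using AB w by (simp add: assoc_mult_mat_vec[of _ n n _ n])
qed

lemma similar_kernel_vec_vanishing_on:
  fixes A :: "'a :: idom mat"
  assumes sim: "similar_mat_wit A B P Q" and A: "A \<in> carrier_mat n n"
    and B_ker: "\<And>w. w \<in> carrier_vec n \<Longrightarrow> (\<And>i. m \<le> i \<Longrightarrow> i < n \<Longrightarrow> w $ i = 0) \<Longrightarrow>
        B *\<^sub>v w = 0\<^sub>v n"
    and "m \<le> n" and C: "C \<subseteq> {..<n}" "card C < m"
  shows "\<exists>z \<in> carrier_vec n. z \<noteq> 0\<^sub>v n \<and> A *\<^sub>v z = 0\<^sub>v n \<and> (\<forall>i\<in>C. z $ i = 0)"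
proof -
  note AB = similar_mat_witD2[OF A sim]
  obtain w where w: "w \<in> carrier_vec n" "w \<noteq> 0\<^sub>v n" "\<And>i. m \<le> i \<Longrightarrow> i < n \<Longrightarrow> w $ i = 0"
    "\<And>i. i \<in> C \<Longrightarrow> (P *\<^sub>v w) $ i = 0"
    using nonzero_low_vec_mult_vanishing_on[OF AB(6) \<open>m \<le> n\<close> C] by blast
  have "A *\<^sub>v (P *\<^sub>v w) = 0\<^sub>v n"
    unfolding similar_mat_wit_mult_vec(1)[OF sim A w(1)] using B_ker[OF w(1,3)] AB by auto
  moreover have "P *\<^sub>v w \<noteq> 0\<^sub>v n"
  proof
    assume "P *\<^sub>v w = 0\<^sub>v n"
    then have "w = Q *\<^sub>v 0\<^sub>v n" using similar_mat_wit_mult_vec(2)[OF sim A w(1)] by simp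
    then show False using w(2) AB by auto
  qed
  moreover have "P *\<^sub>v w \<in> carrier_vec n" using AB(6) w(1) by simp
  ultimately show ?thesis using w(4) by blast
qed

lemma char_matrix_prod_kernel_vanishing_on:
  fixes A :: "'a :: conjugatable_ordered_field mat"
  assumes A: "A \<in> carrier_mat n n" and char: "char_poly A = (\<Prod>a \<leftarrow> bs @ cs. [:- a, 1:])"
    and C: "C \<subseteq> {..<n}" "card C < length bs"
  shows "\<exists>z \<in> carrier_vec n. z \<noteq> 0\<^sub>v n \<and> char_matrix_prod A bs *\<^sub>v z = 0\<^sub>v n \<and> (\<forall>i\<in>C. z $ i = 0)"
proof -
  obtain B P Q where "schur_decomposition A (bs @ cs) = (B, P, Q)"
    by (cases "schur_decomposition A (bs @ cs)") auto
  from schur_decomposition[OF A char this]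
  have sim: "similar_mat_wit A B P Q" and ut: "upper_triangular B" and diag: "diag_mat B = bs @ cs"
    by auto
  have B: "B \<in> carrier_mat n n" using similar_mat_witD2[OF A sim] by auto
  then have len: "length bs \<le> n"
    using arg_cong[OF diag, of length] by (simp add: diag_mat_def)
  have "char_matrix_prod B bs *\<^sub>v w = 0\<^sub>v n"
    if "w \<in> carrier_vec n" "\<And>i. length bs \<le> i \<Longrightarrow> i < n \<Longrightarrow> w $ i = 0" for w
    using upper_triangular_char_matrix_prod_kernel[OF B ut len that] diag by simp
  then show ?thesis
    using similar_kernel_vec_vanishing_on[OF similar_mat_wit_char_matrix_prod[OF sim] _ _ len C] A
    by auto
qed

definition prob_vec :: "nat \<Rightarrow> real vec \<Rightarrow> bool" where
  "prob_vec n \<mu> \<longleftrightarrow> \<mu> \<in> carrier_vec n \<and> (\<forall>i<n. 0 \<le> \<mu> $ i) \<and> (\<Sum>i<n. \<mu> $ i) = 1"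

definition support_vec :: "'a :: zero vec \<Rightarrow> nat set" where
  "support_vec v = {i. i < dim_vec v \<and> v $ i \<noteq> 0}"

lemma zero_sum_vec_pos_entry:
  fixes z :: "real vec"
  assumes z: "z \<in> carrier_vec n" "z \<noteq> 0\<^sub>v n" and sum: "(\<Sum>i<n. z $ i) = 0"
  obtains i where "i < n" "0 < z $ i"
proof (rule ccontr)
  assume "\<not> thesis"
  with that have "\<forall>i\<in>{..<n}. 0 \<le> - z $ i" by force
  moreover have "(\<Sum>i<n. - z $ i) = 0" using sum by (simp add: sum_negf)
  ultimately have "\<forall>i<n. z $ i = 0" using sum_nonneg_eq_0_iff[of "{..<n}" "\<lambda>i. - z $ i"] by simp
  then have "z = 0\<^sub>v n" using z(1) by (intro eq_vecI) auto
  with z(2) show False ..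
qed

lemma shrink_support:
  assumes \<mu>: "prob_vec n \<mu>" and z: "z \<in> carrier_vec n" "z \<noteq> 0\<^sub>v n" "(\<Sum>i<n. z $ i) = 0"
    and vanish: "\<And>i. i < n \<Longrightarrow> \<mu> $ i = 0 \<Longrightarrow> z $ i = 0"
  obtains \<tau> where "prob_vec n (\<mu> - \<tau> \<cdot>\<^sub>v z)" "support_vec (\<mu> - \<tau> \<cdot>\<^sub>v z) \<subset> support_vec \<mu>"
proof -
  have \<mu>n: "\<mu> \<in> carrier_vec n" and \<mu>0: "\<And>i. i < n \<Longrightarrow> 0 \<le> \<mu> $ i" and \<mu>1: "(\<Sum>i<n. \<mu> $ i) = 1"
    using \<mu> unfolding prob_vec_def by auto
  define T where "T = {i. i < n \<and> 0 < z $ i}"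
  have T: "finite T" "T \<noteq> {}"
    unfolding T_def using zero_sum_vec_pos_entry[OF z] by auto
  \<comment> \<open>the largest step along -z that keeps \<mu> nonnegative\<close>
  define \<tau> where "\<tau> = Min ((\<lambda>i. \<mu> $ i / z $ i) ` T)"
  have "\<tau> \<in> (\<lambda>i. \<mu> $ i / z $ i) ` T" unfolding \<tau>_def using T by (intro Min_in) auto
  then obtain i0 where i0: "i0 \<in> T" "\<tau> = \<mu> $ i0 / z $ i0" by blast
  have \<tau>_le: "\<tau> \<le> \<mu> $ i / z $ i" if "i \<in> T" for i
    unfolding \<tau>_def using T that by simp
  have \<tau>0: "0 \<le> \<tau>" using i0 \<mu>0 unfolding T_def by auto
  define \<mu>' where "\<mu>' = \<mu> - \<tau> \<cdot>\<^sub>v z"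
  have \<mu>'n: "\<mu>' \<in> carrier_vec n" unfolding \<mu>'_def using \<mu>n z by simp
  have \<mu>'i: "\<mu>' $ i = \<mu> $ i - \<tau> * z $ i" if "i < n" for i
    unfolding \<mu>'_def using that \<mu>n z by simp
  have "0 \<le> \<mu>' $ i" if i: "i < n" for i
  proof (cases "0 < z $ i")
    case True
    then have "\<tau> * z $ i \<le> \<mu> $ i" using \<tau>_le[of i] i unfolding T_def by (simp add: pos_le_divide_eq)
    then show ?thesis using \<mu>'i[OF i] by simp
  next
    case False
    then have "\<tau> * z $ i \<le> 0" using \<tau>0 by (simp add: mult_nonneg_nonpos)
    then show ?thesis using \<mu>'i[OF i] \<mu>0[OF i] by simp
  qed
  moreover have "(\<Sum>i<n. \<mu>' $ i) = 1"
    using \<mu>1 z(3) \<mu>'i by (simp add: sum_subtractf sum_distrib_left[symmetric])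
  ultimately have "prob_vec n \<mu>'" using \<mu>'n unfolding prob_vec_def by simp
  moreover have "support_vec \<mu>' \<subseteq> support_vec \<mu>"
    using \<mu>'i vanish \<mu>n \<mu>'n unfolding support_vec_def by auto
  moreover have "i0 \<in> support_vec \<mu> - support_vec \<mu>'"
    using i0 vanish \<mu>'i \<mu>n \<mu>'n unfolding support_vec_def T_def by auto
  ultimately show ?thesis using that unfolding \<mu>'_def by blast
qed

lemma sparse_prob_vec_same_image:
  fixes G :: "real mat"
  assumes G: "G \<in> carrier_mat r n"
    and rich_kernel: "\<And>C. C \<subseteq> {..<n} \<Longrightarrow> card C < m \<Longrightarrow>
        \<exists>z \<in> carrier_vec n. z \<noteq> 0\<^sub>v n \<and> G *\<^sub>v z = 0\<^sub>v r \<and> (\<forall>i\<in>C. z $ i = 0)"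
    and kernel_sum: "\<And>z. z \<in> carrier_vec n \<Longrightarrow> G *\<^sub>v z = 0\<^sub>v r \<Longrightarrow> (\<Sum>i<n. z $ i) = 0"
    and u: "prob_vec n u"
  shows "\<exists>\<mu>. prob_vec n \<mu> \<and> G *\<^sub>v \<mu> = G *\<^sub>v u \<and> card (support_vec \<mu>) \<le> n - m"
proof -
  have "\<exists>\<mu>'. prob_vec n \<mu>' \<and> G *\<^sub>v \<mu>' = G *\<^sub>v u \<and> card (support_vec \<mu>') \<le> n - m"
    if "prob_vec n \<mu>" "G *\<^sub>v \<mu> = G *\<^sub>v u" "card (support_vec \<mu>) = c" for \<mu> c
    using that
  proof (induction c arbitrary: \<mu> rule: less_induct)
    case (less c)
    have \<mu>n: "\<mu> \<in> carrier_vec n" using less.prems(1) unfolding prob_vec_def by simp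
    then have supp: "support_vec \<mu> \<subseteq> {..<n}" unfolding support_vec_def by auto
    show ?case
    proof (cases "c \<le> n - m")
      case True
      with less.prems show ?thesis by blast
    next
      case False
      define C where "C = {..<n} - support_vec \<mu>"
      have "card C = n - c"
        unfolding C_def using supp less.prems(3) by (simp add: card_Diff_subset finite_subset)
      moreover have "c \<le> n" using card_mono[OF _ supp] less.prems(3) by simp
      ultimately have "card C < m" using False by linarith
      then obtain z where z: "z \<in> carrier_vec n" "z \<noteq> 0\<^sub>v n" "G *\<^sub>v z = 0\<^sub>v r" "\<forall>i\<in>C. z $ i = 0"
        using rich_kernel[of C] unfolding C_def by blast
      have "\<And>i. i < n \<Longrightarrow> \<mu> $ i = 0 \<Longrightarrow> z $ i = 0"
        using z(4) \<mu>n unfolding C_def support_vec_def by auto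
      then obtain \<tau> where \<tau>: "prob_vec n (\<mu> - \<tau> \<cdot>\<^sub>v z)" "support_vec (\<mu> - \<tau> \<cdot>\<^sub>v z) \<subset> support_vec \<mu>"
        using shrink_support[OF less.prems(1) z(1,2) kernel_sum[OF z(1,3)]] by blast
      have "G *\<^sub>v (\<mu> - \<tau> \<cdot>\<^sub>v z) = G *\<^sub>v \<mu>"
        using G \<mu>n z(1,3) by (simp add: mult_minus_distrib_mat_vec mult_mat_vec vec_eq_iff)
      moreover have "card (support_vec (\<mu> - \<tau> \<cdot>\<^sub>v z)) < c"
        using psubset_card_mono[OF finite_subset[OF supp] \<tau>(2)] less.prems(3) by simp
      ultimately show ?thesis using less.IH \<tau>(1) less.prems(2) by simp
    qed
  qed
  then show ?thesis using u by blast
qed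

definition vec_norm :: "real vec \<Rightarrow> real" where
  "vec_norm v = L2_set (\<lambda>i. v $ i) {0..<dim_vec v}"

lemma vec_norm_nonneg: "0 \<le> vec_norm v"
  unfolding vec_norm_def by (rule L2_set_nonneg)

lemma vec_norm_square: "vec_norm v ^ 2 = v \<bullet> v"
  unfolding vec_norm_def scalar_prod_def L2_set_def
  by (simp add: power2_eq_square sum_nonneg)

lemma scalar_prod_self_nonneg: "0 \<le> v \<bullet> (v :: real vec)"
  using vec_norm_square[of v] by (metis zero_le_power2)

lemma vec_norm_add_le:
  assumes "v \<in> carrier_vec n" and "w \<in> carrier_vec n"
  shows "vec_norm (v + w) \<le> vec_norm v + vec_norm w"
proof -
  have "vec_norm (v + w) = L2_set (\<lambda>i. v $ i + w $ i) {0..<n}"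
    unfolding vec_norm_def using assms by (intro L2_set_cong) auto
  also have "\<dots> \<le> L2_set (\<lambda>i. v $ i) {0..<n} + L2_set (\<lambda>i. w $ i) {0..<n}"
    by (rule L2_set_triangle_ineq)
  finally show ?thesis unfolding vec_norm_def using assms by simp
qed

lemma vec_norm_smult: "vec_norm (c \<cdot>\<^sub>v v) = \<bar>c\<bar> * vec_norm v"
proof -
  have "vec_norm (c \<cdot>\<^sub>v v) = L2_set (\<lambda>i. \<bar>c\<bar> * v $ i) {0..<dim_vec v}"
    unfolding vec_norm_def L2_set_def by (simp add: power_mult_distrib)
  then show ?thesis unfolding vec_norm_def by (simp add: L2_set_right_distrib)
qed

lemma scalar_prod_square_le:
  assumes "v \<in> carrier_vec n" and "w \<in> carrier_vec n"
  shows "(v \<bullet> w) ^ 2 \<le> (v \<bullet> v) * (w \<bullet> (w :: real vec))"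
proof -
  have "\<bar>v \<bullet> w\<bar> \<le> (\<Sum>i = 0..<n. \<bar>v $ i\<bar> * \<bar>w $ i\<bar>)"
    using assms unfolding scalar_prod_def by (auto intro: order.trans[OF sum_abs] simp: abs_mult)
  also have "\<dots> \<le> vec_norm v * vec_norm w"
    unfolding vec_norm_def using assms L2_set_mult_ineq by auto
  finally have "(v \<bullet> w) ^ 2 \<le> (vec_norm v * vec_norm w) ^ 2"
    by (metis abs_ge_zero power2_abs power_mono)
  then show ?thesis by (simp add: power_mult_distrib vec_norm_square)
qed

lemma pow_mult_vec_growth_shift:
  fixes M :: "real mat"
  assumes M: "M \<in> carrier_mat n n" and x: "x \<in> carrier_vec n" and w: "w \<in> carrier_vec n"
    and Mx: "M *\<^sub>v x = a \<cdot>\<^sub>v x + w" and a: "\<bar>a\<bar> < s"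
    and C: "\<And>k. vec_norm ((M ^\<^sub>m k) *\<^sub>v w) \<le> C * s ^ k"
  shows "\<exists>B. \<forall>k. vec_norm ((M ^\<^sub>m k) *\<^sub>v x) \<le> B * s ^ k"
proof -
  \<comment> \<open>M^(k+1) x = a M^k x + M^k w, so the bound B s^k is inherited once C \<le> B (s - |a|)\<close>
  define B where "B = max (vec_norm x) (C / (s - \<bar>a\<bar>))"
  have CB: "C \<le> B * (s - \<bar>a\<bar>)"
    using a unfolding B_def by (simp add: pos_divide_le_eq[symmetric])
  have "vec_norm ((M ^\<^sub>m k) *\<^sub>v x) \<le> B * s ^ k" for k
  proof (induction k)
    case 0
    then show ?case using M x by (simp add: B_def carrier_matD)
  next
    case (Suc k)
    have Mk: "M ^\<^sub>m k \<in> carrier_mat n n" using M by simp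
    have "(M ^\<^sub>m Suc k) *\<^sub>v x = a \<cdot>\<^sub>v ((M ^\<^sub>m k) *\<^sub>v x) + (M ^\<^sub>m k) *\<^sub>v w"
      using M Mk x w
      by (simp add: assoc_mult_mat_vec[of _ n n _ n] Mx mult_add_distrib_mat_vec[OF Mk _ w]
          mult_mat_vec[OF Mk x])
    then have "vec_norm ((M ^\<^sub>m Suc k) *\<^sub>v x)
        \<le> \<bar>a\<bar> * vec_norm ((M ^\<^sub>m k) *\<^sub>v x) + vec_norm ((M ^\<^sub>m k) *\<^sub>v w)"
      using vec_norm_add_le[of "a \<cdot>\<^sub>v ((M ^\<^sub>m k) *\<^sub>v x)" n "(M ^\<^sub>m k) *\<^sub>v w"] Mk x w
      by (simp add: vec_norm_smult)
    also have "\<dots> \<le> \<bar>a\<bar> * (B * s ^ k) + (s - \<bar>a\<bar>) * B * s ^ k"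
    proof (rule add_mono)
      show "\<bar>a\<bar> * vec_norm ((M ^\<^sub>m k) *\<^sub>v x) \<le> \<bar>a\<bar> * (B * s ^ k)"
        using Suc by (simp add: mult_left_mono)
      have "C * s ^ k \<le> (s - \<bar>a\<bar>) * B * s ^ k"
        using CB a by (simp add: mult_right_mono mult.commute)
      then show "vec_norm ((M ^\<^sub>m k) *\<^sub>v w) \<le> (s - \<bar>a\<bar>) * B * s ^ k"
        using C[of k] by linarith
    qed
    also have "\<dots> = B * s ^ Suc k" by (simp add: algebra_simps)
    finally show ?case .
  qed
  then show ?thesis by blast
qed

lemma char_matrix_prod_kernel_growth:
  fixes M :: "real mat"
  assumes M: "M \<in> carrier_mat n n"
  shows "x \<in> carrier_vec n \<Longrightarrow> char_matrix_prod M as *\<^sub>v x = 0\<^sub>v n \<Longrightarrow> \<forall>a\<in>set as. \<bar>a\<bar> < s \<Longrightarrow>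
    \<exists>C. \<forall>k. vec_norm ((M ^\<^sub>m k) *\<^sub>v x) \<le> C * s ^ k"
proof (induction as arbitrary: x rule: rev_induct)
  case Nil
  then have "x = 0\<^sub>v n" using M by (simp add: carrier_matD)
  then have "vec_norm ((M ^\<^sub>m k) *\<^sub>v x) \<le> 0 * s ^ k" for k
    using M by (simp add: vec_norm_def L2_set_def)
  then show ?case by blast
next
  case (snoc a as)
  define w where "w = char_matrix M a *\<^sub>v x"
  have w: "w \<in> carrier_vec n" unfolding w_def using M snoc.prems(1) by (simp add: char_matrix_mult_vec)
  have "char_matrix_prod M as *\<^sub>v w = 0\<^sub>v n"
    unfolding w_def using snoc.prems(2) char_matrix_prod_snoc_mult_vec[OF M snoc.prems(1)] by simp
  with snoc.IH[OF w] snoc.prems(3) obtain C where C: "\<And>k. vec_norm ((M ^\<^sub>m k) *\<^sub>v w) \<le> C * s ^ k"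
    by auto
  have Mx: "M *\<^sub>v x = a \<cdot>\<^sub>v x + w"
    unfolding w_def using M snoc.prems(1) by (auto simp: char_matrix_mult_vec)
  show ?case
    by (rule pow_mult_vec_growth_shift[OF M snoc.prems(1) w Mx _ C]) (use snoc.prems(3) in simp)
qed

lemma log_convex_geometric_lower_bound:
  fixes a :: "nat \<Rightarrow> real"
  assumes nonneg: "\<And>k. 0 \<le> a k"
    and log_convex: "\<And>k. a (Suc k) ^ 2 \<le> a k * a (Suc (Suc k))"
    and pos: "0 < a k"
  shows "(a (Suc k) / a k) ^ j * a k \<le> a (k + j)"
proof -
  define \<rho> where "\<rho> = a (Suc k) / a k"
  have \<rho>0: "0 \<le> \<rho>" unfolding \<rho>_def using nonneg pos by simp
  have step: "\<rho> * a (k + j) \<le> a (k + Suc j)" for j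
  proof (cases "\<rho> = 0")
    case False
    then have "0 < \<rho>" using \<rho>0 by simp
    have "0 < a (k + j) \<and> \<rho> * a (k + j) \<le> a (k + Suc j)"
    proof (induction j)
      case 0
      show ?case using pos unfolding \<rho>_def by simp
    next
      case (Suc j)
      then have p: "0 < a (k + j)" and q: "\<rho> * a (k + j) \<le> a (k + Suc j)" by auto
      have p': "0 < a (k + Suc j)" using p q \<open>0 < \<rho>\<close> by (smt (verit) mult_pos_pos)
      have "a (k + j) * (\<rho> * a (k + Suc j)) \<le> a (k + Suc j) ^ 2"
        using mult_right_mono[OF q, of "a (k + Suc j)"] p' by (simp add: power2_eq_square mult_ac)
      also have "\<dots> \<le> a (k + j) * a (k + Suc (Suc j))"
        using log_convex[of "k + j"] by simp
      finally show ?case using p p' by simp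
    qed
    then show ?thesis by simp
  qed (simp add: nonneg)
  have "\<rho> ^ j * a k \<le> a (k + j)"
  proof (induction j)
    case (Suc j)
    have "\<rho> ^ Suc j * a k = \<rho> * (\<rho> ^ j * a k)" by simp
    also have "\<dots> \<le> \<rho> * a (k + j)" using Suc \<rho>0 by (rule mult_left_mono)
    also have "\<dots> \<le> a (k + Suc j)" by (rule step)
    finally show ?case .
  qed simp
  then show ?thesis unfolding \<rho>_def .
qed

lemma log_convex_ratio_le:
  fixes a :: "nat \<Rightarrow> real"
  assumes nonneg: "\<And>k. 0 \<le> a k"
    and log_convex: "\<And>k. a (Suc k) ^ 2 \<le> a k * a (Suc (Suc k))"
    and growth: "\<And>s. r < s \<Longrightarrow> \<exists>C. \<forall>k. a k \<le> C * s ^ k"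
    and "0 \<le> r"
  shows "a (Suc k) \<le> r * a k"
proof (rule ccontr)
  assume "\<not> ?thesis"
  then have gt: "r * a k < a (Suc k)" by simp
  have pos: "0 < a k"
  proof (rule ccontr)
    assume "\<not> 0 < a k"
    then have "a k = 0" using nonneg[of k] by simp
    then have "a (Suc k) = 0" using log_convex[of k] nonneg[of "Suc k"] by simp
    with gt \<open>a k = 0\<close> show False by simp
  qed
  define \<rho> where "\<rho> = a (Suc k) / a k"
  have "r < \<rho>" using gt pos unfolding \<rho>_def by (simp add: field_simps)
  \<comment> \<open>log-convexity makes a grow like \<rho>^k, contradicting the growth bound at s\<close>
  define s where "s = (r + \<rho>) / 2"
  have s: "r < s" "s < \<rho>" "0 < s" using \<open>r < \<rho>\<close> \<open>0 \<le> r\<close> unfolding s_def by auto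
  obtain C where C: "\<And>k. a k \<le> C * s ^ k" using growth[OF s(1)] by blast
  have "(\<rho> / s) ^ j \<le> C * s ^ k / a k" for j
  proof -
    have "\<rho> ^ j * a k \<le> C * s ^ k * s ^ j"
      using log_convex_geometric_lower_bound[OF nonneg log_convex pos, of j] C[of "k + j"]
      unfolding \<rho>_def by (simp add: power_add mult.assoc)
    then show ?thesis using pos s(3) by (simp add: power_divide field_simps)
  qed
  moreover obtain j where "C * s ^ k / a k < (\<rho> / s) ^ j"
    using real_arch_pow[of "\<rho> / s"] s by auto
  ultimately show False by (meson not_le)
qed

lemma log_convex_decay:
  fixes a :: "nat \<Rightarrow> real"
  assumes "\<And>k. 0 \<le> a k"
    and "\<And>k. a (Suc k) ^ 2 \<le> a k * a (Suc (Suc k))"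
    and "\<And>s. r < s \<Longrightarrow> \<exists>C. \<forall>k. a k \<le> C * s ^ k"
    and "0 \<le> r"
  shows "a k \<le> r ^ k * a 0"
proof (induction k)
  case (Suc k)
  have "a (Suc k) \<le> r * a k" by (rule log_convex_ratio_le[OF assms])
  also have "\<dots> \<le> r ^ Suc k * a 0" using Suc \<open>0 \<le> r\<close> by (simp add: mult_left_mono mult.assoc)
  finally show ?case .
qed simp

lemma pow_mat_Suc_left:
  assumes M: "M \<in> carrier_mat n n"
  shows "M ^\<^sub>m Suc k = M * M ^\<^sub>m k"
proof (induction k)
  case (Suc k)
  have "M ^\<^sub>m Suc (Suc k) = M * M ^\<^sub>m k * M" using Suc by simp
  also have "\<dots> = M * M ^\<^sub>m Suc k" using M by (simp add: assoc_mult_mat[of _ n n _ n _ n])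
  finally show ?case .
qed (use M in simp)

lemma symmetric_pow_mult_vec_log_convex:
  fixes M :: "real mat"
  assumes M: "M \<in> carrier_mat n n" "transpose_mat M = M" and x: "x \<in> carrier_vec n"
  defines "y \<equiv> \<lambda>k. (M ^\<^sub>m k) *\<^sub>v x"
  shows "(y (Suc k) \<bullet> y (Suc k)) ^ 2 \<le> (y k \<bullet> y k) * (y (Suc (Suc k)) \<bullet> y (Suc (Suc k)))"
proof -
  have y: "y j \<in> carrier_vec n" for j
    unfolding y_def using M(1) x by (intro mult_mat_vec_carrier[of _ n n] pow_carrier_mat)
  have y_Suc: "y (Suc j) = M *\<^sub>v y j" for j
    unfolding y_def pow_mat_Suc_left[OF M(1)] using M x by (simp add: assoc_mult_mat_vec[of _ n n _ n])
  \<comment> \<open>symmetry moves one factor M across the scalar product\<close>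
  have "y (Suc k) \<bullet> y (Suc k) = y k \<bullet> y (Suc (Suc k))"
    using transpose_vec_mult_scalar[OF M(1) y y, of k "Suc k"] M y
    by (simp add: y_Suc comm_scalar_prod[of _ n])
  then show ?thesis using scalar_prod_square_le[OF y y] by simp
qed

lemma symmetric_char_matrix_prod_kernel_decay:
  fixes M :: "real mat"
  assumes M: "M \<in> carrier_mat n n" "transpose_mat M = M" and x: "x \<in> carrier_vec n"
    and ker: "char_matrix_prod M as *\<^sub>v x = 0\<^sub>v n" and roots: "\<forall>a\<in>set as. \<bar>a\<bar> \<le> t"
  shows "((M ^\<^sub>m k) *\<^sub>v x) \<bullet> ((M ^\<^sub>m k) *\<^sub>v x) \<le> t ^ (2 * k) * (x \<bullet> x)"
proof -
  have "\<exists>C. \<forall>k. ((M ^\<^sub>m k) *\<^sub>v x) \<bullet> ((M ^\<^sub>m k) *\<^sub>v x) \<le> C * s ^ k" if "t\<^sup>2 < s" for s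
  proof -
    have "0 < s" using that by (smt (verit) zero_le_power2)
    have "\<bar>t\<bar> < sqrt s" using real_less_rsqrt[of "\<bar>t\<bar>" s] that by simp
    then have "\<forall>a\<in>set as. \<bar>a\<bar> < sqrt s" using roots by force
    then obtain C where C: "\<And>k. vec_norm ((M ^\<^sub>m k) *\<^sub>v x) \<le> C * sqrt s ^ k"
      using char_matrix_prod_kernel_growth[OF M(1) x ker] by blast
    have "((M ^\<^sub>m k) *\<^sub>v x) \<bullet> ((M ^\<^sub>m k) *\<^sub>v x) \<le> C\<^sup>2 * s ^ k" for k
    proof -
      have "vec_norm ((M ^\<^sub>m k) *\<^sub>v x) ^ 2 \<le> (C * sqrt s ^ k) ^ 2"
        using C[of k] vec_norm_nonneg by (intro power_mono) auto
      also have "(C * sqrt s ^ k) ^ 2 = C\<^sup>2 * s ^ k"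
        using \<open>0 < s\<close>
        by (simp add: power_mult_distrib power_mult[symmetric] mult.commute[of k] power_mult)
      finally show ?thesis by (simp add: vec_norm_square)
    qed
    then show ?thesis by blast
  qed
  then have "((M ^\<^sub>m k) *\<^sub>v x) \<bullet> ((M ^\<^sub>m k) *\<^sub>v x) \<le> (t\<^sup>2) ^ k * (((M ^\<^sub>m 0) *\<^sub>v x) \<bullet> ((M ^\<^sub>m 0) *\<^sub>v x))"
    using log_convex_decay[where a = "\<lambda>k. ((M ^\<^sub>m k) *\<^sub>v x) \<bullet> ((M ^\<^sub>m k) *\<^sub>v x)"]
      scalar_prod_self_nonneg symmetric_pow_mult_vec_log_convex[OF M x] by simp
  then show ?thesis using M x by (simp add: power_mult carrier_matD)
qed

definition column_stochastic :: "nat \<Rightarrow> real mat \<Rightarrow> bool" where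
  "column_stochastic n M \<longleftrightarrow> M \<in> carrier_mat n n \<and> (\<forall>i<n. \<forall>j<n. 0 \<le> M $$ (i,j)) \<and>
     (\<forall>j<n. (\<Sum>i<n. M $$ (i,j)) = 1)"

definition uniform_vec :: "nat \<Rightarrow> real vec" where
  "uniform_vec n = vec n (\<lambda>_. 1 / real n)"

lemma sum_mult_mat_vec_col_sums:
  fixes M :: "'a :: comm_semiring_1 mat"
  assumes M: "M \<in> carrier_mat n n" and col: "\<And>j. j < n \<Longrightarrow> (\<Sum>i<n. M $$ (i,j)) = c"
    and v: "v \<in> carrier_vec n"
  shows "(\<Sum>i<n. (M *\<^sub>v v) $ i) = c * (\<Sum>i<n. v $ i)"
proof -
  have "(\<Sum>i<n. (M *\<^sub>v v) $ i) = (\<Sum>i<n. \<Sum>j<n. M $$ (i,j) * v $ j)"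
    using M v by (intro sum.cong) (auto simp: scalar_prod_def atLeast0LessThan)
  also have "\<dots> = (\<Sum>j<n. (\<Sum>i<n. M $$ (i,j)) * v $ j)"
    by (subst sum.swap) (simp add: sum_distrib_right)
  also have "\<dots> = c * (\<Sum>j<n. v $ j)" using col by (simp add: sum_distrib_left)
  finally show ?thesis .
qed

lemma sum_char_matrix_prod_mult_vec:
  fixes M :: "'a :: field mat"
  assumes M: "M \<in> carrier_mat n n" and col: "\<And>j. j < n \<Longrightarrow> (\<Sum>i<n. M $$ (i,j)) = c"
    and v: "v \<in> carrier_vec n"
  shows "(\<Sum>i<n. (char_matrix_prod M as *\<^sub>v v) $ i) = (\<Prod>a\<leftarrow>as. c - a) * (\<Sum>i<n. v $ i)"
proof (induction as)
  case Nil
  then show ?case using M v by (simp add: carrier_matD)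
next
  case (Cons a as)
  define y where "y = char_matrix_prod M as *\<^sub>v v"
  have y: "y \<in> carrier_vec n"
    unfolding y_def by (rule mult_mat_vec_carrier[OF char_matrix_prod_carrier[OF M] v])
  have "char_matrix_prod M (a # as) *\<^sub>v v = M *\<^sub>v y - a \<cdot>\<^sub>v y"
    using M v char_matrix_mult_vec[OF M y, of a] unfolding y_def
    by (simp add: assoc_mult_mat_vec[of _ n n _ n])
  then have "(\<Sum>i<n. (char_matrix_prod M (a # as) *\<^sub>v v) $ i) = (\<Sum>i<n. (M *\<^sub>v y) $ i) - a * (\<Sum>i<n. y $ i)"
    using M y by (simp add: sum_subtractf sum_distrib_left)
  also have "\<dots> = (c - a) * (\<Sum>i<n. y $ i)"
    using sum_mult_mat_vec_col_sums[OF M col y] by (simp add: algebra_simps)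
  finally show ?case using Cons unfolding y_def by simp
qed

lemma char_matrix_prod_kernel_sum_zero:
  fixes M :: "'a :: field mat"
  assumes M: "M \<in> carrier_mat n n" and col: "\<And>j. j < n \<Longrightarrow> (\<Sum>i<n. M $$ (i,j)) = 1"
    and "1 \<notin> set as" and z: "z \<in> carrier_vec n" "char_matrix_prod M as *\<^sub>v z = 0\<^sub>v n"
  shows "(\<Sum>i<n. z $ i) = 0"
proof -
  have "(\<Prod>a\<leftarrow>as. 1 - a) * (\<Sum>i<n. z $ i) = 0"
    using sum_char_matrix_prod_mult_vec[OF M col z(1), of as] z(2) by simp
  moreover have "(\<Prod>a\<leftarrow>as. 1 - a) \<noteq> 0"
    using \<open>1 \<notin> set as\<close> by (auto simp: prod_list_zero_iff)
  ultimately show ?thesis by simp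
qed

lemma prob_vec_mult_mat_vec:
  assumes M: "column_stochastic n M" and \<mu>: "prob_vec n \<mu>"
  shows "prob_vec n (M *\<^sub>v \<mu>)"
proof -
  have Mn: "M \<in> carrier_mat n n" and \<mu>n: "\<mu> \<in> carrier_vec n"
    using M \<mu> unfolding column_stochastic_def prob_vec_def by auto
  have "0 \<le> (M *\<^sub>v \<mu>) $ i" if "i < n" for i
    using M \<mu> that Mn \<mu>n unfolding column_stochastic_def prob_vec_def
    by (auto simp: scalar_prod_def intro!: sum_nonneg)
  moreover have "(\<Sum>i<n. (M *\<^sub>v \<mu>) $ i) = 1"
    using sum_mult_mat_vec_col_sums[OF Mn _ \<mu>n, of 1] M \<mu>
    unfolding column_stochastic_def prob_vec_def by simp
  ultimately show ?thesis using Mn \<mu>n unfolding prob_vec_def by simp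
qed

lemma prob_vec_pow_mult_mat_vec:
  assumes M: "column_stochastic n M" and \<mu>: "prob_vec n \<mu>"
  shows "prob_vec n ((M ^\<^sub>m k) *\<^sub>v \<mu>)"
proof -
  have Mn: "M \<in> carrier_mat n n" and \<mu>n: "\<mu> \<in> carrier_vec n"
    using M \<mu> unfolding column_stochastic_def prob_vec_def by auto
  show ?thesis
  proof (induction k)
    case 0
    then show ?case using \<mu> \<mu>n Mn by (simp add: carrier_matD)
  next
    case (Suc k)
    have "(M ^\<^sub>m Suc k) *\<^sub>v \<mu> = M *\<^sub>v ((M ^\<^sub>m k) *\<^sub>v \<mu>)"
      unfolding pow_mat_Suc_left[OF Mn] using Mn \<mu>n by (simp add: assoc_mult_mat_vec[of _ n n _ n])
    then show ?case using prob_vec_mult_mat_vec[OF M Suc] by simp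
  qed
qed

lemma prob_vec_uniform_vec: "0 < n \<Longrightarrow> prob_vec n (uniform_vec n)"
  unfolding prob_vec_def uniform_vec_def by simp

lemma symmetric_stochastic_pow_uniform_vec:
  assumes M: "column_stochastic n M" and sym: "transpose_mat M = M"
  shows "(M ^\<^sub>m k) *\<^sub>v uniform_vec n = uniform_vec n"
proof -
  have Mn: "M \<in> carrier_mat n n" using M unfolding column_stochastic_def by simp
  have row: "(\<Sum>j<n. M $$ (i,j)) = 1" if "i < n" for i
  proof -
    have "(\<Sum>j<n. M $$ (i,j)) = (\<Sum>j<n. transpose_mat M $$ (j,i))"
      using Mn that by (intro sum.cong) auto
    then show ?thesis using M that unfolding sym column_stochastic_def by simp
  qed
  have fixed: "M *\<^sub>v uniform_vec n = uniform_vec n"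
  proof (rule eq_vecI)
    fix i assume "i < dim_vec (uniform_vec n)"
    then have i: "i < n" unfolding uniform_vec_def by simp
    have "(M *\<^sub>v uniform_vec n) $ i = (\<Sum>j<n. M $$ (i,j)) / real n"
      using i Mn by (simp add: uniform_vec_def scalar_prod_def atLeast0LessThan sum_divide_distrib)
    then show "(M *\<^sub>v uniform_vec n) $ i = uniform_vec n $ i"
      using row[OF i] i unfolding uniform_vec_def by simp
  qed (use Mn in \<open>simp add: uniform_vec_def\<close>)
  show ?thesis
  proof (induction k)
    case (Suc k)
    then show ?case
      unfolding pow_mat_Suc_left[OF Mn] using Mn fixed
      by (simp add: assoc_mult_mat_vec[of _ n n _ n] uniform_vec_def)
  qed (use Mn in \<open>simp add: uniform_vec_def carrier_matD\<close>)
qed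

lemma sq_dist_uniform_vec:
  assumes "v \<in> carrier_vec n"
  shows "(v - uniform_vec n) \<bullet> (v - uniform_vec n) = (\<Sum>i<n. (v $ i - 1 / real n)\<^sup>2)"
  using assms by (simp add: uniform_vec_def scalar_prod_def atLeast0LessThan power2_eq_square)

lemma prob_vec_sq_dist_uniform_le_1:
  assumes \<mu>: "prob_vec n \<mu>"
  shows "(\<mu> - uniform_vec n) \<bullet> (\<mu> - uniform_vec n) \<le> 1"
proof -
  have \<mu>n: "\<mu> \<in> carrier_vec n" and \<mu>0: "\<And>i. i < n \<Longrightarrow> 0 \<le> \<mu> $ i" and \<mu>1: "(\<Sum>i<n. \<mu> $ i) = 1"
    using \<mu> unfolding prob_vec_def by auto
  have "0 < n" using \<mu>1 by (cases n) auto
  have le1: "\<mu> $ i \<le> 1" if "i < n" for i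
    using member_le_sum[of i "{..<n}" "\<lambda>i. \<mu> $ i"] \<mu>0 \<mu>1 that by simp
  have "(\<mu> - uniform_vec n) \<bullet> (\<mu> - uniform_vec n)
      = (\<Sum>i<n. \<mu> $ i ^ 2) - 2 / real n * (\<Sum>i<n. \<mu> $ i) + real n * (1 / real n) ^ 2"
    unfolding sq_dist_uniform_vec[OF \<mu>n]
    by (simp add: power2_diff sum.distrib sum_subtractf sum_distrib_left sum_divide_distrib
        algebra_simps)
  also have "\<dots> = (\<Sum>i<n. \<mu> $ i ^ 2) - 1 / real n"
    using \<mu>1 \<open>0 < n\<close> by (simp add: power2_eq_square field_simps)
  also have "\<dots> \<le> (\<Sum>i<n. \<mu> $ i)"
    using \<mu>0 le1 \<open>0 < n\<close>
    by (smt (verit) lessThan_iff of_nat_0_less_iff divide_pos_pos mult_left_le power2_eq_square sum_mono)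
  finally show ?thesis using \<mu>1 by simp
qed

lemma char_poly_linear_factors_length:
  assumes "A \<in> carrier_mat n n" and "char_poly A = (\<Prod>a \<leftarrow> as. [:- a, 1:])"
  shows "length as = n"
  using assms degree_monic_char_poly[of A n] degree_linear_factors[of uminus as] by simp

lemma symmetric_stochastic_sparse_decay:
  assumes P: "column_stochastic n P" "transpose_mat P = P" and "0 < n"
    and char: "char_poly P = (\<Prod>a \<leftarrow> bs @ cs. [:- a, 1:])"
    and roots: "\<forall>a\<in>set bs. \<bar>a\<bar> \<le> t" and "t < 1"
  obtains \<mu> where "prob_vec n \<mu>" "card (support_vec \<mu>) \<le> length cs"
    "\<And>k. ((P ^\<^sub>m k) *\<^sub>v \<mu> - uniform_vec n) \<bullet> ((P ^\<^sub>m k) *\<^sub>v \<mu> - uniform_vec n) \<le> t ^ (2 * k)"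
proof -
  have Pn: "P \<in> carrier_mat n n" using P unfolding column_stochastic_def by simp
  have col: "\<And>j. j < n \<Longrightarrow> (\<Sum>i<n. P $$ (i,j)) = 1" using P unfolding column_stochastic_def by simp
  have len: "length (bs @ cs) = n" by (rule char_poly_linear_factors_length[OF Pn char])
  define G where "G = char_matrix_prod P bs"
  have G: "G \<in> carrier_mat n n" unfolding G_def using Pn by simp
  have "1 \<notin> set bs" using roots \<open>t < 1\<close> by auto
  note kernel_sum = char_matrix_prod_kernel_sum_zero[OF Pn col this, folded G_def]
  obtain \<mu> where \<mu>: "prob_vec n \<mu>" "G *\<^sub>v \<mu> = G *\<^sub>v uniform_vec n"
    "card (support_vec \<mu>) \<le> n - length bs"
    using sparse_prob_vec_same_image[OF G _ kernel_sum prob_vec_uniform_vec[OF \<open>0 < n\<close>]]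
      char_matrix_prod_kernel_vanishing_on[OF Pn char] unfolding G_def by blast
  define x where "x = \<mu> - uniform_vec n"
  have x: "x \<in> carrier_vec n" and \<mu>n: "\<mu> \<in> carrier_vec n"
    using \<mu>(1) unfolding x_def prob_vec_def uniform_vec_def by auto
  have "G *\<^sub>v x = 0\<^sub>v n"
    unfolding x_def using mult_minus_distrib_mat_vec[OF G \<mu>n, of "uniform_vec n"] \<mu>(2) G
    by (simp add: uniform_vec_def)
  have "((P ^\<^sub>m k) *\<^sub>v \<mu> - uniform_vec n) \<bullet> ((P ^\<^sub>m k) *\<^sub>v \<mu> - uniform_vec n) \<le> t ^ (2 * k)" for k
  proof -
    have "(P ^\<^sub>m k) *\<^sub>v x = (P ^\<^sub>m k) *\<^sub>v \<mu> - uniform_vec n"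
      unfolding x_def using symmetric_stochastic_pow_uniform_vec[OF P] Pn \<mu>n
      by (simp add: mult_minus_distrib_mat_vec[of _ n n] uniform_vec_def)
    moreover have "((P ^\<^sub>m k) *\<^sub>v x) \<bullet> ((P ^\<^sub>m k) *\<^sub>v x) \<le> t ^ (2 * k) * (x \<bullet> x)"
      using symmetric_char_matrix_prod_kernel_decay[OF Pn P(2) x] \<open>G *\<^sub>v x = 0\<^sub>v n\<close> roots
      unfolding G_def by blast
    moreover have "t ^ (2 * k) * (x \<bullet> x) \<le> t ^ (2 * k)"
      using prob_vec_sq_dist_uniform_le_1[OF \<mu>(1)] scalar_prod_self_nonneg[of x]
      unfolding x_def by (simp add: mult_left_le power_mult)
    ultimately show ?thesis by simp
  qed
  moreover have "n - length bs = length cs" using len by simp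
  ultimately show ?thesis using that \<mu> by simp
qed

lemma stochastic_pow_sq_dist_uniform_le_1:
  assumes "column_stochastic n P" and "prob_vec n \<mu>"
  shows "((P ^\<^sub>m k) *\<^sub>v \<mu> - uniform_vec n) \<bullet> ((P ^\<^sub>m k) *\<^sub>v \<mu> - uniform_vec n) \<le> 1"
  by (rule prob_vec_sq_dist_uniform_le_1[OF prob_vec_pow_mult_mat_vec[OF assms]])

lemma prob_vec_unit_vec:
  assumes "i < n"
  shows "prob_vec n (unit_vec n i)" and "support_vec (unit_vec n i :: real vec) = {i}"
  using assms by (auto simp: prob_vec_def support_vec_def split: if_splits)

lemma symmetric_stochastic_sparse_approx:
  assumes P: "column_stochastic n P" "transpose_mat P = P"
    and char: "char_poly P = (\<Prod>a \<leftarrow> bs @ cs. [:- a, 1:])" and "cs \<noteq> []"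
    and roots: "\<forall>a\<in>set bs. \<bar>a\<bar> \<le> t"
  obtains \<mu> where "prob_vec n \<mu>" "card (support_vec \<mu>) \<le> length cs"
    "\<And>k. ((P ^\<^sub>m k) *\<^sub>v \<mu> - uniform_vec n) \<bullet> ((P ^\<^sub>m k) *\<^sub>v \<mu> - uniform_vec n) \<le> t ^ (2 * k)"
proof -
  have "length (bs @ cs) = n"
    using P(1) char char_poly_linear_factors_length unfolding column_stochastic_def by blast
  with \<open>cs \<noteq> []\<close> have "0 < n" by auto
  show ?thesis
  proof (cases "t < 1")
    case True
    then show ?thesis using symmetric_stochastic_sparse_decay[OF P \<open>0 < n\<close> char roots] that by blast
  next
    case False
    have \<delta>: "prob_vec n (unit_vec n 0)" "support_vec (unit_vec n 0 :: real vec) = {0}"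
      using prob_vec_unit_vec \<open>0 < n\<close> by auto
    show ?thesis
    proof (rule that[OF \<delta>(1)])
      show "card (support_vec (unit_vec n 0 :: real vec)) \<le> length cs"
        using \<delta>(2) \<open>cs \<noteq> []\<close> by (simp add: Suc_leI)
      show "((P ^\<^sub>m k) *\<^sub>v unit_vec n 0 - uniform_vec n) \<bullet> ((P ^\<^sub>m k) *\<^sub>v unit_vec n 0 - uniform_vec n)
          \<le> t ^ (2 * k)" for k
        using order_trans[OF stochastic_pow_sq_dist_uniform_le_1[OF P(1) \<delta>(1)]] False
        by (simp add: one_le_power)
    qed
  qed
qed

lemma adjacency_matrix_nonneg:
  "adjacency_matrix n A \<Longrightarrow> i < n \<Longrightarrow> j < n \<Longrightarrow> 0 \<le> A $$ (i,j)"
  unfolding adjacency_matrix_def by force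

lemma connected_regular_graph_degree_pos:
  assumes A: "adjacency_matrix n A" and reg: "regular_graph n A d"
    and conn: "connected_graph n A" and "2 \<le> n"
  shows "0 < d"
proof -
  have "(0, 1) \<in> (graph_edges n A)\<^sup>*" using conn \<open>2 \<le> n\<close> unfolding connected_graph_def by auto
  then obtain y where "(0, y) \<in> graph_edges n A" by (auto elim: converse_rtranclE)
  then have y: "y < n" "A $$ (0, y) = 1" unfolding graph_edges_def by auto
  have "A $$ (0, y) \<le> (\<Sum>j<n. A $$ (0, j))"
    using adjacency_matrix_nonneg[OF A] y(1) \<open>2 \<le> n\<close> by (intro member_le_sum) auto
  then show ?thesis using reg y \<open>2 \<le> n\<close> unfolding regular_graph_def by simp
qed

lemma regular_graph_walk_matrix:
  assumes A: "adjacency_matrix n A" and reg: "regular_graph n A d" and "0 < d"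
  shows "column_stochastic n ((1 / real d) \<cdot>\<^sub>m A)"
    and "transpose_mat ((1 / real d) \<cdot>\<^sub>m A) = (1 / real d) \<cdot>\<^sub>m A"
proof -
  have An: "A \<in> carrier_mat n n" using A unfolding adjacency_matrix_def by simp
  have "(\<Sum>i<n. ((1 / real d) \<cdot>\<^sub>m A) $$ (i,j)) = 1" if "j < n" for j
  proof -
    have "(\<Sum>i<n. ((1 / real d) \<cdot>\<^sub>m A) $$ (i,j)) = (\<Sum>i<n. A $$ (j,i)) / real d"
      using A An that unfolding adjacency_matrix_def by (simp add: sum_divide_distrib)
    then show ?thesis using reg that \<open>0 < d\<close> unfolding regular_graph_def by simp
  qed
  moreover have "0 \<le> ((1 / real d) \<cdot>\<^sub>m A) $$ (i,j)" if "i < n" "j < n" for i j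
    using adjacency_matrix_nonneg[OF A that] An that by simp
  ultimately show "column_stochastic n ((1 / real d) \<cdot>\<^sub>m A)"
    using An unfolding column_stochastic_def by simp
  show "transpose_mat ((1 / real d) \<cdot>\<^sub>m A) = (1 / real d) \<cdot>\<^sub>m A"
    using A unfolding adjacency_matrix_def by (intro eq_matI) auto
qed

lemma eigenvalues_by_abs_char_poly_rotate:
  assumes "eigenvalues_by_abs M ls"
  shows "char_poly M = (\<Prod>a \<leftarrow> drop l ls @ take l ls. [:- a, 1:])"
proof -
  have "char_poly M = (\<Prod>a \<leftarrow> take l ls @ drop l ls. [:- a, 1:])"
    using assms unfolding eigenvalues_by_abs_def by simp
  also have "\<dots> = (\<Prod>a \<leftarrow> drop l ls @ take l ls. [:- a, 1:])"
    by (simp only: map_append prod_list.append mult.commute)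
  finally show ?thesis .
qed

lemma eigenvalues_by_abs_drop_le:
  assumes "eigenvalues_by_abs M ls"
  shows "\<forall>a\<in>set (drop l ls). \<bar>a\<bar> \<le> \<bar>ls ! l\<bar>"
proof
  fix a assume "a \<in> set (drop l ls)"
  then obtain j where "j < length (drop l ls)" "a = drop l ls ! j"
    by (auto simp: in_set_conv_nth)
  then have "l + j < length ls" "a = ls ! (l + j)" by auto
  then show "\<bar>a\<bar> \<le> \<bar>ls ! l\<bar>"
    using assms sorted_wrt_nth_less[of "\<lambda>x y. \<bar>y\<bar> \<le> \<bar>x\<bar>" ls l "l + j"]
    unfolding eigenvalues_by_abs_def by (cases j) auto
qed

theorem theorem1:
  fixes n d l :: nat and A :: "real mat" and ls :: "real list"
  assumes "adjacency_matrix n A"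
    and "regular_graph n A d"
    and "connected_graph n A"
    and "eigenvalues_by_abs ((1 / real d) \<cdot>\<^sub>m A) ls"
    and "1 \<le> l" and "l \<le> n - 1"
  shows "\<exists>\<mu>0 :: real vec. dim_vec \<mu>0 = n \<and> (\<forall>i<n. \<mu>0 $ i \<ge> 0) \<and>
           (\<Sum>i<n. \<mu>0 $ i) = 1 \<and> card {i. i < n \<and> \<mu>0 $ i \<noteq> 0} \<le> l \<and>
           (\<forall>k::nat. (\<Sum>i<n. (((((1 / real d) \<cdot>\<^sub>m A) ^\<^sub>m k) *\<^sub>v \<mu>0) $ i - 1 / real n)\<^sup>2)
                      \<le> (ls ! l) ^ (2 * k))"
proof -
  define P where "P = (1 / real d) \<cdot>\<^sub>m A"
  have "2 \<le> n" "l < n" using assms(5,6) by auto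
  then have "0 < d" using connected_regular_graph_degree_pos assms(1-3) by blast
  note P = regular_graph_walk_matrix[OF assms(1,2) this, folded P_def]
  note char = eigenvalues_by_abs_char_poly_rotate[OF assms(4)[folded P_def], of l]
  have "P \<in> carrier_mat n n" using P(1) unfolding column_stochastic_def by simp
  from char_poly_linear_factors_length[OF this char] have "length ls = n"
    by (simp add: min_def split: if_split_asm)
  then have "take l ls \<noteq> []" "length (take l ls) = l" using assms(5) \<open>l < n\<close> by auto
  then obtain \<mu> where "prob_vec n \<mu>" "card (support_vec \<mu>) \<le> l" and decay:
    "\<And>k. ((P ^\<^sub>m k) *\<^sub>v \<mu> - uniform_vec n) \<bullet> ((P ^\<^sub>m k) *\<^sub>v \<mu> - uniform_vec n) \<le> \<bar>ls ! l\<bar> ^ (2 * k)"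
    using symmetric_stochastic_sparse_approx[OF P char _ eigenvalues_by_abs_drop_le[OF assms(4)]]
    by metis
  then show ?thesis
    using sq_dist_uniform_vec[of _ n] prob_vec_pow_mult_mat_vec[OF P(1)]
    unfolding P_def prob_vec_def support_vec_def by (intro exI[of _ \<mu>]) (auto simp: power_even_abs)
qed

end
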